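(* For $\mathbf v\in\mathbb{R}^\infty$, let $g_{-\mathbf v}(x)$ be the generating function of $\mathbb{F}^{\rm F}\mathbf v$ and $g_{\mathbf v}(x)$ the generating function of $\mathbb{L}^{\rm F}\mathbf v$, where $\mathbb{F}^{\rm F}=\left(\frac{x}{1-x},\frac{x^2}{1-x}\right)$ and $\mathbb{L}^{\rm F}=\left(\frac{2-x}{1-x},\frac{x^2}{1-x}\right)$. Let $C(x)=\frac{1-\sqrt{1-4x}}{2x}$ and $M(x)=\frac{1-x-\sqrt{(1-x)^2-4x^2}}{2x^2}$. Then, as formal power series: (a) $g_{\mathbf v}(xC(x))=\left(C(x)-\frac{2}{x}\right)g_{-\mathbf v}(1-C(x))$; (b) $g_{\mathbf v}(1-C(x))=\left(2xC(x)^2+xC(x)-4C(x)+\frac{2-x}{x}\right)g_{-\mathbf v}(xC(x))$; (c) $g_{\mathbf v}(xC(x))=\left(\frac{x-2}{x}+\frac{x}{1-x}M\!\left(\frac{x}{1-x}\right)\right)g_{-\mathbf v}\!\left(-\frac{x}{1-x}M\!\left(\frac{x}{1-x}\right)\right)$; (d) $g_{\mathbf v}\!\left(-\frac{x}{1-x}M\!\left(\frac{x}{1-x}\right)\right)=\left((3x-4)C(x)+\frac{2x^2C(x)}{1-x}M\!\left(\frac{x}{1-x}\right)+\frac{2-x}{x}\right)g_{-\mathbf v}(xC(x))$.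
   Context: $\mathbb{R}^\infty$ is the space of real column vectors $[v_0,v_1,\ldots]^T$, identified with generating functions $\sum_n v_nx^n$. For formal power series $g(x)$ and $f(x)$ with $f(0)=0$, $(g(x),f(x))$ denotes the infinite lower triangular matrix whose $j$-th column has generating function $g(x)f(x)^j$; it maps a vector with generating function $U(x)$ to the vector with generating function $g(x)U(f(x))$. Note $g_{-\mathbf v}$ has zero constant term, so the products with the factor $1/x$ above are formal power series. *)

theory Defs
  imports "HOL-Computational_Algebra.Computational_Algebra"
begin

definition gf :: "(nat \<Rightarrow> real) \<Rightarrow> real fps" where
  "gf v = Abs_fps v"

definition riordan :: "real fps \<Rightarrow> real fps \<Rightarrow> nat \<Rightarrow> nat \<Rightarrow> real" where
  "riordan g f i j = (g * f ^ j) $ i"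

text \<open>Product of an infinite lower triangular matrix with a column vector
  (entries above the diagonal are zero, so the sum is finite).\<close>

definition lt_mat_vec :: "(nat \<Rightarrow> nat \<Rightarrow> real) \<Rightarrow> (nat \<Rightarrow> real) \<Rightarrow> nat \<Rightarrow> real" where
  "lt_mat_vec A v i = (\<Sum>j\<le>i. A i j * v j)"

definition FF :: "nat \<Rightarrow> nat \<Rightarrow> real" where
  "FF = riordan (fps_X / (1 - fps_X)) (fps_X ^ 2 / (1 - fps_X))"

definition LF :: "nat \<Rightarrow> nat \<Rightarrow> real" where
  "LF = riordan ((2 - fps_X) / (1 - fps_X)) (fps_X ^ 2 / (1 - fps_X))"

definition g_minus :: "(nat \<Rightarrow> real) \<Rightarrow> real fps" where
  "g_minus v = gf (lt_mat_vec FF v)"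

definition g_plus :: "(nat \<Rightarrow> real) \<Rightarrow> real fps" where
  "g_plus v = gf (lt_mat_vec LF v)"

text \<open>Square root of a power series (with constant term 1: principal branch).\<close>

definition fps_sqrt :: "real fps \<Rightarrow> real fps" where
  "fps_sqrt a = fps_radical (\<lambda>n x. root n x) 2 a"

definition catalanC :: "real fps" where
  "catalanC = (1 - fps_sqrt (1 - 4 * fps_X)) / (2 * fps_X)"

definition motzkinM :: "real fps" where
  "motzkinM = (1 - fps_X - fps_sqrt ((1 - fps_X) ^ 2 - 4 * fps_X ^ 2)) / (2 * fps_X ^ 2)"

end

theory Submission
  imports Defs
begin

text \<open>A Riordan array \<open>(g, f)\<close> maps \<open>U\<close> to \<open>g \<cdot> U(f)\<close>, so \<open>g\<^sub>v(h)\<close> and \<open>g\<^sub>-\<^sub>v(h)\<close> are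
  rational functions of \<open>h\<close> times \<open>U(h\<^sup>2/(1 - h))\<close>, where \<open>U\<close> is the generating function of \<open>v\<close>.
  From \<open>C = 1 + xC\<^sup>2\<close> one gets \<open>1/(1 - xC) = C\<close> and \<open>1/C = 1 - xC\<close>, so the two
  substitutions \<open>h = xC\<close> and \<open>h = 1 - C\<close> give the same inner series \<open>x\<^sup>2C\<^sup>3\<close>;
  moreover \<open>-x/(1 - x) \<cdot> M(x/(1 - x)) = 1 - C\<close>, since both sides solve the same
  quadratic. Each of the four identities thereby reduces to an identity between
  rational functions of \<open>x\<close> and \<open>C\<close> modulo \<open>xC\<^sup>2 - C + 1 = 0\<close>, checked in the field
  of Laurent series.\<close>

lemma fps_divide_times_fps_X_power_cancel:
  fixes f :: "'a::field fps"
  assumes "\<And>i. i < k \<Longrightarrow> f $ i = 0" and "c \<noteq> 0"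
  shows "f / (fps_const c * fps_X ^ k) * (fps_const c * fps_X ^ k) = f"
proof -
  have "fps_X ^ k dvd f"
  proof (cases "f = 0")
    case False
    then have "k \<le> subdegree f"
      using assms(1) by (auto intro: subdegree_geI)
    with False show ?thesis by (simp add: fps_dvd_iff)
  qed simp
  then have "fps_const c * fps_X ^ k dvd f"
    using assms(2) by (simp add: mult_unit_dvd_iff')
  then show ?thesis by simp
qed

lemma fps_sqrt_power2:
  assumes "a $ 0 = 1"
  shows "fps_sqrt a ^ 2 = a"
  using power_radical[of a "\<lambda>n x. root n x" 1] assms
  by (simp add: fps_sqrt_def numeral_2_eq_2)

lemma fps_sqrt_nth_0: "a $ 0 = 1 \<Longrightarrow> fps_sqrt a $ 0 = 1"
  by (simp add: fps_sqrt_def)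

lemma catalanC_equation: "fps_X * catalanC ^ 2 - catalanC + 1 = 0"
proof -
  define S where "S = fps_sqrt (1 - 4 * fps_X)"
  have S2: "S ^ 2 = 1 - 4 * fps_X" and S0: "S $ 0 = 1"
    by (simp_all add: S_def fps_sqrt_power2 fps_sqrt_nth_0)
  have "(1 - S) / (fps_const 2 * fps_X ^ 1) * (fps_const 2 * fps_X ^ 1) = 1 - S"
    by (rule fps_divide_times_fps_X_power_cancel) (simp_all add: S0)
  moreover have "catalanC = (1 - S) / (fps_const 2 * fps_X ^ 1)"
    by (simp add: catalanC_def S_def numeral_fps_const)
  ultimately have "2 * fps_X * catalanC = 1 - S"
    by (simp add: numeral_fps_const mult.commute)
  then have "(1 - 2 * fps_X * catalanC) ^ 2 = 1 - 4 * fps_X"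
    by (simp add: S2)
  then have "4 * fps_X * (fps_X * catalanC ^ 2 - catalanC + 1) = 0"
    by (simp add: algebra_simps power2_eq_square)
  then show ?thesis by simp
qed

lemma catalanC_nth_0: "catalanC $ 0 = 1"
  using arg_cong[OF catalanC_equation, of "\<lambda>f. f $ 0"] by simp

lemma motzkinM_equation: "motzkinM = 1 + fps_X * motzkinM + fps_X ^ 2 * motzkinM ^ 2"
proof -
  define T where "T = fps_sqrt ((1 - fps_X) ^ 2 - 4 * fps_X ^ 2)"
  have T2: "T ^ 2 = (1 - fps_X) ^ 2 - 4 * fps_X ^ 2"
    unfolding T_def by (rule fps_sqrt_power2) (simp add: power2_eq_square)
  have T0: "T $ 0 = 1"
    unfolding T_def by (rule fps_sqrt_nth_0) (simp add: power2_eq_square)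
  have "2 * T $ 1 = -2"
    using arg_cong[OF T2, of "\<lambda>f. f $ 1"] T0
    by (simp add: power2_eq_square fps_mult_nth algebra_simps)
  then have T1: "T $ 1 = -1" by simp
  have "(1 - fps_X - T) / (fps_const 2 * fps_X ^ 2) * (fps_const 2 * fps_X ^ 2) = 1 - fps_X - T"
    by (rule fps_divide_times_fps_X_power_cancel)
      (auto simp: T0 T1[unfolded One_nat_def] less_2_cases_iff)
  moreover have "motzkinM = (1 - fps_X - T) / (fps_const 2 * fps_X ^ 2)"
    by (simp add: motzkinM_def T_def numeral_fps_const)
  ultimately have "2 * fps_X ^ 2 * motzkinM = 1 - fps_X - T"
    by (simp add: numeral_fps_const mult.commute)
  then have "(1 - fps_X - 2 * fps_X ^ 2 * motzkinM) ^ 2 = (1 - fps_X) ^ 2 - 4 * fps_X ^ 2"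
    by (simp add: T2)
  then have "4 * fps_X ^ 2 * (motzkinM - 1 - fps_X * motzkinM - fps_X ^ 2 * motzkinM ^ 2) = 0"
    by (simp add: algebra_simps power2_eq_square)
  then have "motzkinM - 1 - fps_X * motzkinM - fps_X ^ 2 * motzkinM ^ 2 = 0"
    by simp
  then show ?thesis by algebra
qed

lemma gf_lt_mat_vec_riordan:
  assumes "f $ 0 = 0"
  shows "gf (lt_mat_vec (riordan g f) v) = g * (gf v oo f)"
proof (rule fps_ext)
  fix i
  have f_power_nth: "(f ^ j) $ m = 0" if "m < j" for j m
    using startsby_zero_power_prefix[OF assms] that by blast
  have "gf (lt_mat_vec (riordan g f) v) $ i = (\<Sum>j\<le>i. (\<Sum>k=0..i. g$k * (f^j) $ (i-k)) * v j)"
    by (simp add: gf_def lt_mat_vec_def riordan_def fps_mult_nth)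
  also have "\<dots> = (\<Sum>k=0..i. g$k * (\<Sum>j\<le>i. v j * (f^j) $ (i-k)))"
    by (simp add: sum_distrib_left sum_distrib_right mult_ac) (rule sum.swap)
  also have "\<dots> = (\<Sum>k=0..i. g$k * (\<Sum>j=0..i-k. v j * (f^j) $ (i-k)))"
    by (intro sum.cong refl arg_cong[where f = "(*) _"] sum.mono_neutral_right)
      (auto simp: f_power_nth)
  also have "\<dots> = (g * (gf v oo f)) $ i"
    by (simp add: fps_mult_nth fps_compose_nth gf_def)
  finally show "gf (lt_mat_vec (riordan g f) v) $ i = (g * (gf v oo f)) $ i" .
qed

lemma gf_lt_mat_vec_riordan_compose:
  fixes g f h :: "real fps"
  assumes "f $ 0 = 0" and "h $ 0 = 0"
  shows "gf (lt_mat_vec (riordan g f) v) oo h = (g oo h) * (gf v oo (f oo h))"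
  using assms by (simp add: gf_lt_mat_vec_riordan fps_compose_mult_distrib fps_compose_assoc)

lemma fps_compose_divide_one_minus_X:
  fixes a h :: "'a::field fps"
  assumes "h $ 0 = 0"
  shows "(a / (1 - fps_X)) oo h = (a oo h) / (1 - h)"
  using assms by (simp add: fps_divide_unit fps_compose_mult_distrib fps_inverse_compose
      fps_compose_sub_distrib)

lemma g_minus_compose:
  assumes "h $ 0 = 0"
  shows "g_minus v oo h = h / (1 - h) * (gf v oo (h ^ 2 / (1 - h)))"
  using assms unfolding g_minus_def FF_def
  by (simp add: gf_lt_mat_vec_riordan_compose fps_compose_divide_one_minus_X
      flip: fps_compose_power)

lemma g_plus_compose:
  assumes "h $ 0 = 0"
  shows "g_plus v oo h = (2 - h) / (1 - h) * (gf v oo (h ^ 2 / (1 - h)))"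
  using assms unfolding g_plus_def LF_def
  by (simp add: gf_lt_mat_vec_riordan_compose fps_compose_divide_one_minus_X
      fps_compose_sub_distrib numeral_fps_const flip: fps_compose_power)

lemma inverse_one_minus_X_catalanC: "inverse (1 - fps_X * catalanC) = catalanC"
  by (rule fps_inverse_unique) (use catalanC_equation in algebra)

lemma motzkinM_compose_catalanC:
  "fps_X / (1 - fps_X) * (motzkinM oo (fps_X / (1 - fps_X))) = catalanC - 1"
proof -
  \<comment> \<open>\<open>E\<close> and \<open>F\<close> both solve \<open>X Z\<^sup>2 + (2X - 1) Z + X = 0\<close>; the cofactor of \<open>E - F\<close> is a unit.\<close>
  define y :: "real fps" where "y = fps_X / (1 - fps_X)"
  define E where "E = y * (motzkinM oo y)"
  define F where "F = catalanC - 1"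
  have y0: "y $ 0 = 0" by (simp add: y_def)
  have "motzkinM oo y = 1 + y * (motzkinM oo y) + y ^ 2 * (motzkinM oo y) ^ 2"
    using y0 by (subst motzkinM_equation) (simp add: fps_compose_add_distrib
        fps_compose_mult_distrib flip: fps_compose_power)
  moreover have "y * (1 - fps_X) = fps_X"
    by (simp add: y_def fps_divide_unit mult.assoc inverse_mult_eq_1)
  ultimately have "(E - F) * (fps_X * (E + F) + 2 * fps_X - 1) = 0"
    using catalanC_equation unfolding E_def F_def by algebra
  moreover have "fps_X * (E + F) + 2 * fps_X - 1 \<noteq> 0"
    by (auto dest: arg_cong[where f = "\<lambda>f. f $ 0"])
  ultimately show ?thesis by (simp add: E_def F_def y_def)
qed

lemma g_compose_catalanC:
  fixes v :: "nat \<Rightarrow> real"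
  defines "P \<equiv> gf v oo (fps_X ^ 2 * catalanC ^ 3)"
  shows "g_plus v oo (fps_X * catalanC) = (2 - fps_X * catalanC) * catalanC * P"
    and "g_minus v oo (fps_X * catalanC) = fps_X * catalanC ^ 2 * P"
    and "g_plus v oo (1 - catalanC) = (1 + catalanC) * (1 - fps_X * catalanC) * P"
    and "g_minus v oo (1 - catalanC) = (1 - catalanC) * (1 - fps_X * catalanC) * P"
proof -
  have div_XC: "a / (1 - fps_X * catalanC) = a * catalanC" for a
    by (simp add: fps_divide_unit inverse_one_minus_X_catalanC)
  have div_C: "a / catalanC = a * (1 - fps_X * catalanC)" for a
    using fps_inverse_idempotent[of "1 - fps_X * catalanC"]
    by (simp add: fps_divide_unit catalanC_nth_0 inverse_one_minus_X_catalanC)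
  have XC_sq: "(fps_X * catalanC) ^ 2 / (1 - fps_X * catalanC) = fps_X ^ 2 * catalanC ^ 3"
    unfolding div_XC by algebra
  have one_minus_C_sq: "(1 - catalanC) ^ 2 / (1 - (1 - catalanC)) = fps_X ^ 2 * catalanC ^ 3"
    using catalanC_equation by (simp add: div_C) algebra
  have XC_0: "(fps_X * catalanC) $ 0 = 0" and one_minus_C_0: "(1 - catalanC) $ 0 = 0"
    by (simp_all add: catalanC_nth_0)
  show "g_plus v oo (fps_X * catalanC) = (2 - fps_X * catalanC) * catalanC * P"
    unfolding g_plus_compose[OF XC_0] XC_sq by (simp add: div_XC P_def)
  show "g_minus v oo (fps_X * catalanC) = fps_X * catalanC ^ 2 * P"
    unfolding g_minus_compose[OF XC_0] XC_sq by (simp add: div_XC P_def power2_eq_square)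
  show "g_plus v oo (1 - catalanC) = (1 + catalanC) * (1 - fps_X * catalanC) * P"
    unfolding g_plus_compose[OF one_minus_C_0] one_minus_C_sq P_def by (simp add: div_C)
  show "g_minus v oo (1 - catalanC) = (1 - catalanC) * (1 - fps_X * catalanC) * P"
    unfolding g_minus_compose[OF one_minus_C_0] one_minus_C_sq P_def by (simp add: div_C)
qed

lemma catalan_field_identities:
  fixes x c n p :: "'a::field"
  assumes "x \<noteq> 0" and "x * c ^ 2 - c + 1 = 0" and "x / (1 - x) * n = c - 1"
  shows "(2 - x * c) * c * p = (c - 2 / x) * ((1 - c) * (1 - x * c) * p)"
    and "(1 + c) * (1 - x * c) * p = (2 * x * c ^ 2 + x * c - 4 * c + (2 - x) / x) * (x * c ^ 2 * p)"
    and "(2 - x * c) * c * p = ((x - 2) / x + x / (1 - x) * n) * ((1 - c) * (1 - x * c) * p)"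
    and "(1 + c) * (1 - x * c) * p =
      ((3 * x - 4) * c + 2 * x ^ 2 * c / (1 - x) * n + (2 - x) / x) * (x * c ^ 2 * p)"
  using right_inverse[OF assms(1)] assms(2,3) unfolding divide_inverse by algebra+

theorem corollary4p4:
  fixes v :: "nat \<Rightarrow> real"
  shows
  "(fps_to_fls (g_plus v oo (fps_X * catalanC)) =
     (fps_to_fls catalanC - 2 / fls_X) * fps_to_fls (g_minus v oo (1 - catalanC)))
   \<and> (fps_to_fls (g_plus v oo (1 - catalanC)) =
     (2 * fls_X * fps_to_fls catalanC ^ 2 + fls_X * fps_to_fls catalanC
        - 4 * fps_to_fls catalanC + (2 - fls_X) / fls_X)
     * fps_to_fls (g_minus v oo (fps_X * catalanC)))
   \<and> (fps_to_fls (g_plus v oo (fps_X * catalanC)) =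
     ((fls_X - 2) / fls_X
        + fls_X / (1 - fls_X) * fps_to_fls (motzkinM oo (fps_X / (1 - fps_X))))
     * fps_to_fls (g_minus v oo
         (- (fps_X / (1 - fps_X) * (motzkinM oo (fps_X / (1 - fps_X)))))))
   \<and> (fps_to_fls (g_plus v oo
       (- (fps_X / (1 - fps_X) * (motzkinM oo (fps_X / (1 - fps_X)))))) =
     ((3 * fls_X - 4) * fps_to_fls catalanC
        + 2 * fls_X ^ 2 * fps_to_fls catalanC / (1 - fls_X)
            * fps_to_fls (motzkinM oo (fps_X / (1 - fps_X)))
        + (2 - fls_X) / fls_X)
     * fps_to_fls (g_minus v oo (fps_X * catalanC)))"
proof -
  let ?N = "motzkinM oo (fps_X / (1 - fps_X))"
  have neg_N: "- (fps_X / (1 - fps_X) * ?N) = 1 - catalanC"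
    using motzkinM_compose_catalanC by simp
  have catalan_fls: "fls_X * fps_to_fls catalanC ^ 2 - fps_to_fls catalanC + 1 = 0"
    using arg_cong[OF catalanC_equation, of fps_to_fls]
    by (simp add: fls_times_fps_to_fls fps_to_fls_power)
  have motzkin_fls: "fls_X / (1 - fls_X) * fps_to_fls ?N = fps_to_fls catalanC - 1"
    using arg_cong[OF motzkinM_compose_catalanC, of fps_to_fls]
    by (simp add: fls_times_fps_to_fls flip: fls_divide_fps_to_fls)
  show ?thesis
    unfolding neg_N g_compose_catalanC
    by (simp only: fls_times_fps_to_fls fps_to_fls_power fps_to_fls_plus fps_to_fls_minus
        fps_to_fls_numeral fps_X_to_fls fps_one_to_fls)
      (intro conjI catalan_field_identities[OF fls_X_nonzero catalan_fls motzkin_fls])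
qed

end
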